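(* Let $0<q<1/2$, $p=1-q$, and for integers $z\ge1$ let $$P(z)=1-\sum_{k=0}^{z-1}\left(p^zq^k-q^zp^k\right)\binom{k+z-1}{k},\qquad P_{SN}(z)=1-\sum_{k=0}^{z-1}e^{-zq/p}\frac{(zq/p)^k}{k!}\left(1-\left(\frac qp\right)^{z-k}\right).$$ Let $\psi(p)=\frac qp-1-\log\frac qp-\log\frac{1}{4pq}$ (which is $>0$), let $$z_0^*=\max\left(\frac{2}{\pi\left(1-\frac qp\right)^2},\ \frac{1}{2\sqrt2}-\frac{1+\frac1{\sqrt2}}{2}\,\frac{\log\left(\frac{2\psi(p)}{\pi}\right)}{\psi(p)}\right),$$ and let $z_0=\lceil z_0^*\rceil$. Then for every integer $z\ge z_0$ we have $P_{SN}(z)<P(z)$.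
   Context: $P(z)$ is the exact probability of success of a double-spend attack by attackers with relative hash power $q$ after $z$ confirmations, and $P_{SN}(z)$ is Nakamoto's approximation of it. *)

theory Defs
  imports Complex_Main
begin

definition P_exact :: "real \<Rightarrow> nat \<Rightarrow> real" where
  "P_exact q z = (let p = 1 - q in
     1 - (\<Sum>k<z. (p ^ z * q ^ k - q ^ z * p ^ k) * real ((k + z - 1) choose k)))"

definition P_SN :: "real \<Rightarrow> nat \<Rightarrow> real" where
  "P_SN q z = (let p = 1 - q; lam = real z * q / p in
     1 - (\<Sum>k<z. exp (- lam) * lam ^ k / fact k * (1 - (q / p) ^ (z - k))))"

definition psi :: "real \<Rightarrow> real" where
  "psi q = (let p = 1 - q in q / p - 1 - ln (q / p) - ln (1 / (4 * p * q)))"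

definition z0_star :: "real \<Rightarrow> real" where
  "z0_star q = (let p = 1 - q in
     max (2 / (pi * (1 - q / p)^2))
         (1 / (2 * sqrt 2) - (1 + 1 / sqrt 2) / 2 * ln (2 * psi q / pi) / psi q))"

end

theory Submission
  imports Defs "HOL-Analysis.Complex_Transcendental"
begin

text \<open>
  P(z) is twice the probability that the attacker, succeeding with probability q per block,
  is the first to find z blocks, a sum of negative binomial terms C(z - 1 + k, k) q^z p^k,
  k < z; bounding each p^k below by p^(z-1) gives P(z) \<ge> C(2z, z) (pq)^z.  In Nakamoto's
  Poisson expression, comparing the Poisson tail of mean zq/p with that of mean z yields the
  Chernoff-type bound
  P_SN(z) < e^(z(1 - q/p)) (q/p)^z = e^(-z \<psi>) (4pq)^z.  It thus suffices that
  e^(-z \<psi>) \<le> C(2z, z)/4^z.  Since z (C(2z, z)/4^z)^2 increases in z and equals 75/256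
  at z = 3, this reduces to z e^(-2z \<psi>) \<le> 75/256, which the second term of the
  maximum defining z0* guarantees.
\<close>

lemma sum_geometric_plus_power:
  fixes p q :: real
  assumes "p + q = 1"
  shows "(\<Sum>k\<le>n. p * q ^ k) + q ^ Suc n = 1"
proof (induction n)
  case (Suc n)
  have "p * q ^ Suc n + q ^ Suc (Suc n) = (p + q) * q ^ Suc n" by (simp add: algebra_simps)
  with Suc assms show ?case by simp
qed (use assms in simp)

text \<open>Probability that m + 1 successes, each of probability p, occur before n + 1 failures,
  each of probability q.\<close>

definition race_prob :: "real \<Rightarrow> real \<Rightarrow> nat \<Rightarrow> nat \<Rightarrow> real" where
  "race_prob p q m n = (\<Sum>k\<le>n. real ((m + k) choose k) * p ^ (m + 1) * q ^ k)"

lemma race_prob_Suc_Suc: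
  "race_prob p q (Suc m) (Suc n) = p * race_prob p q m (Suc n) + q * race_prob p q (Suc m) n"
proof -
  have "race_prob p q (Suc m) (Suc n)
      = p ^ (m + 2) + (\<Sum>k\<le>n. real ((m + Suc k) choose Suc k) * p ^ (m + 2) * q ^ Suc k)
        + (\<Sum>k\<le>n. real ((Suc m + k) choose k) * p ^ (m + 2) * q ^ Suc k)"
    unfolding race_prob_def by (subst sum.atMost_Suc_shift) (simp add: sum.distrib algebra_simps)
  also have "p ^ (m + 2) + (\<Sum>k\<le>n. real ((m + Suc k) choose Suc k) * p ^ (m + 2) * q ^ Suc k)
      = p * race_prob p q m (Suc n)"
    unfolding race_prob_def by (subst sum.atMost_Suc_shift) (simp add: sum_distrib_left algebra_simps)
  also have "(\<Sum>k\<le>n. real ((Suc m + k) choose k) * p ^ (m + 2) * q ^ Suc k)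
      = q * race_prob p q (Suc m) n"
    unfolding race_prob_def by (simp add: sum_distrib_left algebra_simps)
  finally show ?thesis .
qed

lemma race_prob_complement:
  assumes "p + q = 1"
  shows "race_prob p q m n + race_prob q p n m = 1"
proof (induction m arbitrary: n)
  case 0
  show ?case
    using sum_geometric_plus_power[OF assms, of n] by (simp add: race_prob_def)
next
  case (Suc m)
  show ?case
  proof (induction n)
    case 0
    show ?case
      using sum_geometric_plus_power[of q p "Suc m"] assms by (simp add: race_prob_def)
  next
    case (Suc n)
    have "race_prob p q (Suc m) (Suc n) + race_prob q p (Suc n) (Suc m)
        = p * (race_prob p q m (Suc n) + race_prob q p (Suc n) m)
          + q * (race_prob p q (Suc m) n + race_prob q p n (Suc m))"
      by (simp add: race_prob_Suc_Suc algebra_simps)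
    also have "\<dots> = 1" using Suc.IH \<open>\<And>n. race_prob p q m n + race_prob q p n m = 1\<close> assms by simp
    finally show ?case .
  qed
qed

lemma P_exact_Suc: "P_exact q (Suc m) = 2 * race_prob q (1 - q) m m"
proof -
  have "P_exact q (Suc m) = 1 - race_prob (1 - q) q m m + race_prob q (1 - q) m m"
    unfolding P_exact_def race_prob_def Let_def
    by (simp add: lessThan_Suc_atMost[symmetric] sum_subtractf sum.distrib algebra_simps add.commute)
  also have "race_prob (1 - q) q m m = 1 - race_prob q (1 - q) m m"
    using race_prob_complement[of "1 - q" q m m] by simp
  finally show ?thesis by simp
qed

lemma race_prob_diag_ge:
  assumes "0 \<le> p" "p \<le> 1" "0 \<le> q"
  shows "real (Suc (2 * m) choose m) * q ^ (m + 1) * p ^ m \<le> race_prob q p m m"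
proof -
  have "real (Suc (2 * m) choose m) = (\<Sum>k\<le>m. real ((m + k) choose k))"
    using sum_choose_lower[of m m] by (simp add: mult_2 flip: of_nat_sum)
  then have "real (Suc (2 * m) choose m) * q ^ (m + 1) * p ^ m
      = (\<Sum>k\<le>m. real ((m + k) choose k) * q ^ (m + 1) * p ^ m)"
    by (simp add: sum_distrib_right)
  also have "\<dots> \<le> race_prob q p m m"
    unfolding race_prob_def
    using assms by (intro sum_mono mult_left_mono power_decreasing) auto
  finally show ?thesis .
qed

lemma central_binomial_Suc_eq_double: "(2 * Suc m) choose Suc m = 2 * (Suc (2 * m) choose m)"
  using binomial_symmetric[of m "Suc (2 * m)"] by simp

lemma Suc_mult_central_binomial_Suc:
  "Suc n * ((2 * Suc n) choose Suc n) = 2 * (2 * n + 1) * ((2 * n) choose n)"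
proof -
  have "Suc n * ((2 * Suc n) choose Suc n) = 2 * ((Suc (2 * n) choose Suc n) * Suc n)"
    using central_binomial_Suc_eq_double[of n] binomial_symmetric[of n "Suc (2 * n)"] by simp
  also have "\<dots> = 2 * (Suc (2 * n) * ((2 * n) choose n))"
    by (simp only: Suc_times_binomial_eq)
  finally show ?thesis by simp
qed

lemma P_exact_ge_central_binomial:
  assumes "0 \<le> q" "q \<le> 1" "1 \<le> z"
  shows "real ((2 * z) choose z) * ((1 - q) * q) ^ z \<le> P_exact q z"
proof -
  obtain m where z: "z = Suc m" using assms(3) by (cases z) auto
  have "(1 - q) ^ z \<le> (1 - q) ^ m"
    using assms unfolding z by (intro power_decreasing) auto
  then have "real ((2 * z) choose z) * ((1 - q) * q) ^ z
      \<le> real ((2 * z) choose z) * q ^ z * (1 - q) ^ m"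
    using assms by (simp add: power_mult_distrib mult_left_mono ac_simps)
  also have "\<dots> = 2 * (real (Suc (2 * m) choose m) * q ^ (m + 1) * (1 - q) ^ m)"
    unfolding z central_binomial_Suc_eq_double by simp
  also have "\<dots> \<le> P_exact q z"
    using race_prob_diag_ge[of "1 - q" q m] assms unfolding z P_exact_Suc by simp
  finally show ?thesis .
qed

lemma central_binomial_weighted_mono:
  assumes "1 \<le> m" "m \<le> n"
  shows "real m * (real ((2 * m) choose m) / 4 ^ m)^2 \<le> real n * (real ((2 * n) choose n) / 4 ^ n)^2"
  using assms(2)
proof (induction n rule: dec_induct)
  case (step n)
  define c where "c = real ((2 * n) choose n) / 4 ^ n"
  have n: "0 < real n" using assms step by simp
  have "real (Suc n) * real ((2 * Suc n) choose Suc n) = 2 * (2 * n + 1) * real ((2 * n) choose n)"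
    by (metis (mono_tags) Suc_mult_central_binomial_Suc of_nat_mult of_nat_numeral of_nat_add of_nat_1)
  then have c': "real ((2 * Suc n) choose Suc n) / 4 ^ Suc n = c * ((2 * n + 1) / (2 * n + 2))"
    unfolding c_def by (simp add: divide_simps del: binomial_Suc_Suc) (simp add: algebra_simps)
  have "(real n + 1) * ((2 * n + 1) / (2 * n + 2))^2 = (2 * n + 1)^2 / (4 * (n + 1))"
    using n by (simp add: power_divide divide_simps) (simp add: power2_eq_square algebra_simps)
  also have "\<dots> \<ge> real n"
    using n by (simp add: le_divide_eq power2_eq_square algebra_simps)
  finally have "real n * c^2 \<le> ((real n + 1) * ((2 * n + 1) / (2 * n + 2))^2) * c^2"
    by (rule mult_right_mono) simp
  then have "real n * c^2 \<le> real (Suc n) * (c * ((2 * n + 1) / (2 * n + 2)))^2"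
    by (simp only: power_mult_distrib of_nat_Suc ac_simps)
  then show ?case using step.IH unfolding c_def c' by linarith
qed simp

lemma central_binomial_weighted_ge:
  assumes "3 \<le> n"
  shows "75/256 \<le> real n * (real ((2 * n) choose n) / 4 ^ n)^2"
proof -
  have "(6 choose 3) = (20::nat)" by code_simp
  then show ?thesis
    using central_binomial_weighted_mono[OF _ assms] by (simp add: power2_eq_square)
qed

lemma exp_split_tail:
  fixes x :: real
  shows "exp x = (\<Sum>k<z. x ^ k / fact k) + (\<Sum>n. x ^ (n + z) / fact (n + z))"
    and "summable (\<lambda>n. x ^ (n + z) / fact (n + z))"
proof -
  have "(\<lambda>n. x ^ n / fact n) sums exp x"
    using exp_converges[of x] by (simp add: divide_inverse_commute)
  then have sum: "summable (\<lambda>n. x ^ n / fact n)" and exp: "exp x = (\<Sum>n. x ^ n / fact n)"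
    by (simp_all add: sums_iff)
  show "exp x = (\<Sum>k<z. x ^ k / fact k) + (\<Sum>n. x ^ (n + z) / fact (n + z))"
    using suminf_split_initial_segment[OF sum, of z] exp by simp
  show "summable (\<lambda>n. x ^ (n + z) / fact (n + z))"
    using sum summable_iff_shift[of "\<lambda>n. x ^ n / fact n" z] by simp
qed

lemma exp_tail_scaled_less:
  fixes r x :: real
  assumes "0 < r" "r < 1" "0 < x"
  shows "(\<Sum>n. (r * x) ^ (n + z) / fact (n + z)) < r ^ z * (\<Sum>n. x ^ (n + z) / fact (n + z))"
proof -
  let ?d = "\<lambda>n. r ^ z * (x ^ (n + z) / fact (n + z)) - (r * x) ^ (n + z) / fact (n + z)"
  have d: "?d n = (r ^ z - r ^ (n + z)) * x ^ (n + z) / fact (n + z)" for n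
    by (simp add: power_mult_distrib left_diff_distrib diff_divide_distrib)
  have "0 \<le> ?d n" for n
    unfolding d using assms by (intro divide_nonneg_pos mult_nonneg_nonneg) (auto intro: power_decreasing)
  moreover have "0 < ?d 1"
    unfolding d using assms by (intro divide_pos_pos mult_pos_pos) auto
  moreover have s1: "summable (\<lambda>n. (r * x) ^ (n + z) / fact (n + z))"
    by (rule exp_split_tail(2))
  moreover have s2: "summable (\<lambda>n. r ^ z * (x ^ (n + z) / fact (n + z)))"
    by (intro summable_mult exp_split_tail(2))
  ultimately have "0 < suminf ?d"
    by (intro suminf_pos2[of ?d 1] summable_diff)
  then show ?thesis
    using suminf_diff[OF s2 s1] suminf_mult[OF exp_split_tail(2)] by simp
qed

lemma P_SN_eq:
  fixes q :: real
  defines "r \<equiv> q / (1 - q)"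
  shows "P_SN q z = exp (- (z * r)) *
    ((\<Sum>n. (r * z) ^ (n + z) / fact (n + z)) + r ^ z * (\<Sum>k<z. real z ^ k / fact k))"
proof -
  define l where "l = real z * r"
  have summand: "exp (- l) * l ^ k / fact k * r ^ (z - k) = exp (- l) * r ^ z * (real z ^ k / fact k)"
    if "k < z" for k
  proof -
    have "r ^ z = r ^ k * r ^ (z - k)" using that by (simp flip: power_add)
    then show ?thesis unfolding l_def by (simp add: power_mult_distrib)
  qed
  have "P_SN q z = 1 - (\<Sum>k<z. exp (- l) * l ^ k / fact k * (1 - r ^ (z - k)))"
    unfolding P_SN_def Let_def by (simp add: l_def r_def)
  also have "(\<Sum>k<z. exp (- l) * l ^ k / fact k * (1 - r ^ (z - k)))
      = exp (- l) * (\<Sum>k<z. l ^ k / fact k) - exp (- l) * r ^ z * (\<Sum>k<z. real z ^ k / fact k)"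
  proof -
    have "(\<Sum>k<z. exp (- l) * l ^ k / fact k * r ^ (z - k))
        = exp (- l) * r ^ z * (\<Sum>k<z. real z ^ k / fact k)"
      unfolding sum_distrib_left by (rule sum.cong[OF refl summand]) simp
    then show ?thesis by (simp add: right_diff_distrib sum_subtractf sum_distrib_left)
  qed
  also have "1 = exp (- l) * exp l" by (simp add: exp_minus)
  finally show ?thesis
    unfolding exp_split_tail(1)[of l z] by (simp add: l_def algebra_simps)
qed

lemma P_SN_less:
  assumes "0 < q" "q < 1/2" "1 \<le> z"
  shows "P_SN q z < exp (real z * (1 - q / (1 - q))) * (q / (1 - q)) ^ z"
proof -
  define r where "r = q / (1 - q)"
  have r: "0 < r" "r < 1" using assms by (auto simp: r_def field_simps)
  have "P_SN q z = exp (- (z * r)) *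
      ((\<Sum>n. (r * z) ^ (n + z) / fact (n + z)) + r ^ z * (\<Sum>k<z. real z ^ k / fact k))"
    unfolding r_def by (rule P_SN_eq)
  also have "\<dots> < exp (- (z * r)) *
      (r ^ z * (\<Sum>n. real z ^ (n + z) / fact (n + z)) + r ^ z * (\<Sum>k<z. real z ^ k / fact k))"
    using exp_tail_scaled_less[of r "real z" z] r assms(3) by simp
  also have "\<dots> = exp (- (z * r)) * r ^ z * exp (real z)"
    unfolding exp_split_tail(1)[of "real z" z] by (simp add: algebra_simps)
  also have "\<dots> = exp (real z * (1 - r)) * r ^ z"
    by (simp add: algebra_simps flip: exp_add)
  finally show ?thesis unfolding r_def .
qed

lemma psi_eq:
  assumes "0 < q" "q < 1"
  shows "psi q = 1 / (1 - q) - 2 + 2 * ln (2 * (1 - q))"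
proof -
  define p where "p = 1 - q"
  have p: "0 < p" using assms by (simp add: p_def)
  have "ln (q / p) + ln (1 / (4 * p * q)) = ln (q / p * (1 / (4 * p * q)))"
    using assms p by (intro ln_mult_pos[symmetric]) auto
  also have "q / p * (1 / (4 * p * q)) = inverse ((2 * p) ^ 2)"
    using assms by (simp add: power2_eq_square field_simps)
  also have "ln (inverse ((2 * p) ^ 2)) = - 2 * ln (2 * p)"
    by (simp only: ln_inverse ln_realpow of_nat_numeral mult_minus_left)
  finally have "ln (q / p) + ln (1 / (4 * p * q)) = - 2 * ln (2 * p)" .
  moreover have "q / p - 1 = 1 / p - 2" using p by (simp add: p_def field_simps)
  ultimately show ?thesis unfolding psi_def Let_def p_def[symmetric] by simp
qed

lemma exp_lower_Taylor_cubic: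
  fixes x :: real
  assumes "0 < x"
  shows "1 + x + x^2 / 2 + x^3 / 6 < exp x"
proof -
  have "(\<lambda>n. x ^ n / fact n) sums exp x"
    using exp_converges[of x] by (simp add: divide_inverse_commute)
  then have "(\<Sum>n<4. x ^ n / fact n) < exp x"
    using sum_less_suminf[of "\<lambda>n. x ^ n / fact n" 4] assms by (simp add: sums_iff)
  then show ?thesis by (simp add: numeral_eq_Suc fact_numeral)
qed

lemma ln_2_less: "ln 2 < (0.71::real)"
proof -
  have "2 < exp (0.71::real)"
    using exp_lower_Taylor_cubic[of "0.71"] by (simp add: power2_eq_square power3_eq_cube)
  then show ?thesis by (metis exp_less_cancel_iff exp_ln zero_less_numeral)
qed

lemma e_gt_8_3: "8/3 < exp (1::real)"
  using e_approx_32 by (simp add: abs_if split: if_split_asm)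

lemma psi_pos:
  assumes "0 < q" "q < 1/2"
  shows "0 < psi q"
proof -
  define y where "y = 2 * (1 - q)"
  have y: "1 < y" using assms by (simp add: y_def)
  have "ln (1 / y) < 1 / y - 1"
    using ln_le_minus_one[of "1 / y"] ln_eq_minus_one[of "1 / y"] y by fastforce
  then have "0 < 2 * (ln y - (1 - 1 / y))"
    using y by (simp add: ln_div)
  also have "\<dots> = psi q"
    using assms y by (simp add: psi_eq y_def field_simps)
  finally show ?thesis .
qed

lemma psi_less:
  assumes "0 < q" "q < 1/2"
  shows "psi q < 0.42"
proof -
  define p where "p = 1 - q"
  have p: "1/2 < p" "p < 1" using assms by (auto simp: p_def)
  have "ln (2 * p) \<le> ln 2 + (p - 1)"
    using ln_le_minus_one[of p] p by (simp add: ln_mult_pos)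
  moreover have "1 / p - 2 + 2 * (p - 1) < - 1"
  proof -
    have "(2 * p - 1) * (p - 1) < 0" using p by (simp add: mult_pos_neg)
    then show ?thesis using p by (simp add: field_simps algebra_simps)
  qed
  ultimately have "psi q < 2 * ln 2 - 1"
    using psi_eq[of q] assms unfolding p_def by simp
  then show ?thesis using ln_2_less by simp
qed

lemma exp_neg_mult_psi:
  assumes "0 < q" "q < 1"
  shows "exp (- real z * psi q) * (4 * (1 - q) * q) ^ z
    = exp (real z * (1 - q / (1 - q))) * (q / (1 - q)) ^ z"
proof -
  define r where "r = q / (1 - q)"
  define x where "x = 4 * (1 - q) * q"
  have r: "0 < r" and x: "0 < x" using assms by (auto simp: r_def x_def)
  have "- real z * psi q = real z * (1 - r) + real z * ln r - real z * ln x"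
    using x unfolding psi_def Let_def r_def[symmetric] x_def[symmetric]
    by (simp add: ln_div algebra_simps)
  then have "exp (- real z * psi q) * x ^ z = exp (real z * (1 - r)) * r ^ z"
    using r x by (simp add: exp_add exp_diff exp_of_nat_mult)
  then show ?thesis unfolding r_def x_def .
qed

lemma x_mult_exp_neg_le:
  fixes t x :: real
  assumes "0 < t"
  shows "x * exp (- t * x) \<le> 1 / (exp 1 * t)"
proof -
  have "t * x \<le> exp (t * x - 1)" using exp_ge_add_one_self[of "t * x - 1"] by simp
  then have "t * x * exp (- t * x) \<le> exp (- 1)" by (simp add: exp_diff exp_minus field_simps)
  then show ?thesis using assms by (simp add: exp_minus field_simps)
qed

lemma mult_exp_neg_le_of_ln_bound:
  fixes b c w z :: real
  assumes "0 < b" "0 < w" "1/2 < c" "0 \<le> z" "- c * ln (b * w) \<le> z * w"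
  shows "z * exp (- 2 * (z * w)) \<le> b / (exp 1 * (2 - 1 / c))"
proof -
  define u where "u = z * w"
  define t where "t = 2 - 1 / c"
  have t: "0 < t" using assms(3) by (simp add: t_def field_simps)
  have u: "0 \<le> u" using assms by (simp add: u_def)
  have "- u / c \<le> ln (b * w)"
  proof -
    have "0 < c" using assms(3) by simp
    then show ?thesis using assms(5) by (simp add: u_def field_simps)
  qed
  then have "exp (- u / c) \<le> b * w"
    using assms by (metis exp_le_cancel_iff exp_ln mult_pos_pos)
  moreover have "u * exp (- t * u) \<le> 1 / (exp 1 * t)"
    using t by (rule x_mult_exp_neg_le)
  ultimately have "exp (- u / c) * (u * exp (- t * u)) \<le> b * w * (1 / (exp 1 * t))"
    using u assms(1,2) by (intro mult_mono) auto
  moreover have "exp (- u / c) * exp (- t * u) = exp (- 2 * u)"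
    using assms(3) by (simp add: t_def algebra_simps flip: exp_add)
  ultimately have "u * exp (- 2 * u) \<le> b * w * (1 / (exp 1 * t))"
    by (metis mult.left_commute)
  then have "w * (z * exp (- 2 * (z * w))) \<le> w * (b / (exp 1 * t))"
    by (simp add: u_def ac_simps)
  then show ?thesis
    using assms(2) unfolding t_def by (simp only: mult_le_cancel_left_pos)
qed

lemma half_one_plus_inverse_sqrt2_ge: "0.852 \<le> (1 + 1 / sqrt 2) / (2::real)"
proof -
  have "sqrt 2 \<le> (1.42::real)" by (rule real_le_lsqrt) (auto simp: power2_eq_square)
  then have "1 / 1.42 \<le> 1 / sqrt (2::real)" by (intro divide_left_mono) auto
  then show ?thesis by simp
qed

lemma two_less_z0_star:
  assumes "0 < q" "q < 1/2"
  shows "2 < z0_star q"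
proof -
  define w where "w = psi q"
  define c where "c = (1 + 1 / sqrt 2) / (2::real)"
  have w: "0 < w" "w < 0.42" using psi_pos psi_less assms by (auto simp: w_def)
  have c: "0.852 \<le> c" unfolding c_def by (rule half_one_plus_inverse_sqrt2_ge)
  have "2 * w / pi < exp (- 1)"
  proof -
    have "2 * w / pi < 2 * w / 3" using w pi_gt3 by (intro divide_strict_left_mono) auto
    also have "\<dots> < 1 / 2.72" using w by simp
    also have "\<dots> < exp (- 1)" using e_less_272 by (simp add: exp_minus field_simps)
    finally show ?thesis .
  qed
  then have "ln (2 * w / pi) < ln (exp (- 1))"
    using w by (subst ln_less_cancel_iff) auto
  then have "c * 1 \<le> c * - ln (2 * w / pi)"
    using c by (intro mult_left_mono) auto
  then have "c / w \<le> - c * ln (2 * w / pi) / w"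
    using w by (intro divide_right_mono) auto
  moreover have "2 < c / w" using c w by (simp add: less_divide_eq)
  moreover have "1 / (2 * sqrt 2) - c * ln (2 * w / pi) / w \<le> z0_star q"
    unfolding z0_star_def Let_def c_def w_def by simp
  moreover have "0 < 1 / (2 * sqrt (2::real))" by simp
  ultimately show ?thesis by linarith
qed

lemma exp_neg_psi_le_central_binomial:
  assumes "0 < q" "q < 1/2" "z0_star q \<le> real z"
  shows "exp (- real z * psi q) \<le> real ((2 * z) choose z) / 4 ^ z"
proof -
  define w where "w = psi q"
  define c where "c = (1 + 1 / sqrt 2) / (2::real)"
  have w: "0 < w" using psi_pos assms by (simp add: w_def)
  have c: "0.852 \<le> c" unfolding c_def by (rule half_one_plus_inverse_sqrt2_ge)
  have z: "3 \<le> z" using two_less_z0_star[OF assms(1,2)] assms(3) by linarith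
  have "1 / (2 * sqrt 2) - c * ln (2 * w / pi) / w \<le> real z"
    using assms(3) unfolding z0_star_def Let_def c_def w_def by simp
  then have "(1 / (2 * sqrt 2) - c * ln (2 * w / pi) / w) * w \<le> real z * w"
    using w by (intro mult_right_mono) auto
  then have "w / (2 * sqrt 2) - c * ln (2 * w / pi) \<le> real z * w"
    using w by (simp add: algebra_simps)
  moreover have "0 \<le> w / (2 * sqrt 2)" using w by simp
  ultimately have "- c * ln (2 / pi * w) \<le> real z * w" by simp
  then have "real z * exp (- 2 * (real z * w)) \<le> 2 / pi / (exp 1 * (2 - 1 / c))"
    using w c by (intro mult_exp_neg_le_of_ln_bound) auto
  also have "\<dots> \<le> 75 / 256"
  proof -
    define t where "t = 2 - 1 / c"
    have "3.14 \<le> pi" using pi_approx by simp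
    moreover have "0.826 \<le> t" using c by (simp add: t_def field_simps)
    ultimately have "3.14 * (8 / 3) * 0.826 \<le> pi * exp 1 * t"
      using e_gt_8_3 by (intro mult_mono) auto
    then have "2 / (pi * exp 1 * t) \<le> 2 / (3.14 * (8 / 3) * 0.826)"
      by (intro divide_left_mono) auto
    then show ?thesis by (simp add: t_def)
  qed
  also have "\<dots> \<le> real z * (real ((2 * z) choose z) / 4 ^ z)^2"
    using z by (rule central_binomial_weighted_ge)
  finally have "exp (- 2 * (real z * w)) \<le> (real ((2 * z) choose z) / 4 ^ z)^2"
    by (rule mult_left_le_imp_le) (use z in simp)
  moreover have "exp (- real z * w)^2 = exp (- 2 * (real z * w))"
    by (simp add: power2_eq_square flip: exp_add)
  ultimately have "exp (- real z * w)^2 \<le> (real ((2 * z) choose z) / 4 ^ z)^2" by simp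
  then show ?thesis unfolding w_def by (rule power2_le_imp_le) simp
qed

theorem mainTheorem17:
  fixes q :: real and z :: nat
  assumes "0 < q" and "q < 1/2"
    and "z \<ge> 1"
    and "real z \<ge> real_of_int \<lceil>z0_star q\<rceil>"
  shows "P_SN q z < P_exact q z"
proof -
  have "z0_star q \<le> real z" using assms(4) by linarith
  have "P_SN q z < exp (real z * (1 - q / (1 - q))) * (q / (1 - q)) ^ z"
    using assms(1-3) by (rule P_SN_less)
  also have "\<dots> = exp (- real z * psi q) * (4 * (1 - q) * q) ^ z"
    using assms(1,2) by (intro exp_neg_mult_psi[symmetric]) auto
  also have "\<dots> \<le> real ((2 * z) choose z) / 4 ^ z * (4 * (1 - q) * q) ^ z"
    using exp_neg_psi_le_central_binomial[OF assms(1,2) \<open>z0_star q \<le> real z\<close>] assms(1,2)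
    by (intro mult_right_mono) auto
  also have "\<dots> = real ((2 * z) choose z) * ((1 - q) * q) ^ z"
  proof -
    have "(4 * (1 - q) * q) ^ z = 4 ^ z * ((1 - q) * q) ^ z"
      by (metis mult.assoc power_mult_distrib)
    then show ?thesis by simp
  qed
  also have "\<dots> \<le> P_exact q z"
    using assms(1-3) by (intro P_exact_ge_central_binomial) auto
  finally show ?thesis .
qed

end
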